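(* Let $T_C$ be a finite complete binary tree with vertices $v_1,\dots,v_M$, each vertex $v_i$ carrying a parameter $l_i\in[0,1]$. Define functions $m, \tilde m$ on the vertices of $T_C$ top-down by $$m(v_i) = \big(\tilde m(\mathrm{parent}(v_i))\big)^{1/2}\, l_i, \qquad \tilde m(v_i) = \big(\tilde m(\mathrm{parent}(v_i))\big)^{1/2}\,(1-l_i),$$ with the convention $\tilde m(\mathrm{parent}(\mathrm{root}(T_C))) = 1$. Then for every internal tree $T$ of $T_C$ with $N$ leaves $L_1(T),\dots,L_N(T)$, $$p(T) = \prod_{n=1}^N m(L_n(T)).$$
   Context: All trees are rooted, and children are designated left or right. A complete binary tree is a rooted tree in which every non-leaf vertex has exactly two children (a left and a right child). A full binary tree is a rooted tree in which every vertex has 0 or 2 children. An internal tree of $T_C$ is a full binary tree $T$ with $\mathrm{root}(T)=\mathrm{root}(T_C)$ whose vertices and edges are a subset of those of $T_C$ (left/right children as in $T_C$). $L(T)=(L_1(T),\dots,L_N(T))$ denotes the leaves of $T$ ordered from left-most to right-most. The probability of an internal tree is $p(T)=\pi(\mathrm{root}(T))$, where $\pi(v_i)=l_i$ if $v_i\in L(T)$ and $\pi(v_i)=(1-l_i)\,\pi(\mathrm{left}(v_i))\,\pi(\mathrm{right}(v_i))$ otherwise, with $\mathrm{left},\mathrm{right}$ denoting children in $T$. *)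

theory Defs
  imports Complex_Main
begin

datatype ctree = CLeaf real | CNode real ctree ctree

text \<open>Vertices of T_C are addressed by their path from the root
  (False = go to left child, True = go to right child); [] is the root and
  the parent of a vertex v is butlast v.\<close>
fun vertices :: "ctree \<Rightarrow> bool list set" where
  "vertices (CLeaf l) = {[]}"
| "vertices (CNode l c d) = insert [] (Cons False ` vertices c \<union> Cons True ` vertices d)"

fun labels :: "ctree \<Rightarrow> real set" where
  "labels (CLeaf l) = {l}"
| "labels (CNode l c d) = insert l (labels c \<union> labels d)"

fun lab :: "ctree \<Rightarrow> bool list \<Rightarrow> real" where
  "lab (CLeaf l) [] = l"
| "lab (CNode l c d) [] = l"
| "lab (CNode l c d) (b # p) = lab (if b then d else c) p"
| "lab (CLeaf l) (b # p) = undefined"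

function mtil :: "ctree \<Rightarrow> bool list \<Rightarrow> real" where
  "mtil T v = sqrt (if v = [] then 1 else mtil T (butlast v)) * (1 - lab T v)"
  by auto
termination by (relation "measure (\<lambda>(T, v). length v)") auto

declare mtil.simps[simp del]

definition m :: "ctree \<Rightarrow> bool list \<Rightarrow> real" where
  "m T v = sqrt (if v = [] then 1 else mtil T (butlast v)) * lab T v"

datatype itree = ILeaf | INode itree itree

text \<open>A full binary tree shape S is an internal tree of T_C when it embeds
  at the root of T_C preserving left/right children.\<close>
fun internal :: "itree \<Rightarrow> ctree \<Rightarrow> bool" where
  "internal ILeaf T = True"
| "internal (INode a b) (CNode l c d) = (internal a c \<and> internal b d)"
| "internal (INode a b) (CLeaf l) = False"

fun leaves :: "itree \<Rightarrow> bool list list" where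
  "leaves ILeaf = [[]]"
| "leaves (INode a b) = map (Cons False) (leaves a) @ map (Cons True) (leaves b)"

fun prob :: "itree \<Rightarrow> ctree \<Rightarrow> real" where
  "prob ILeaf T = lab T []"
| "prob (INode a b) (CNode l c d) = (1 - l) * prob a c * prob b d"
| "prob (INode a b) (CLeaf l) = undefined"

end

theory Submission
  imports Defs
begin

text \<open>Generalise from the root to an arbitrary vertex q of T_C: the leaves of an internal tree
  hanging below q contribute \<open>sqrt (mtil (parent q))\<close> times its probability. At an inner vertex
  q each of the two subtrees contributes a factor \<open>sqrt (mtil q)\<close>, and their product
  \<open>mtil q = sqrt (mtil (parent q)) * (1 - l_q)\<close> is exactly the factor that \<open>\<pi>\<close> picks up at q.
  Squaring \<open>sqrt (mtil q)\<close> back needs \<open>mtil \<ge> 0\<close>, which follows from \<open>l \<le> 1\<close>.\<close>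

definition mtil_parent :: "ctree \<Rightarrow> bool list \<Rightarrow> real" where
  "mtil_parent T v = (if v = [] then 1 else mtil T (butlast v))"

lemma mtil_eq: "mtil T v = sqrt (mtil_parent T v) * (1 - lab T v)"
  unfolding mtil_parent_def by (subst mtil.simps) simp

lemma m_eq: "m T v = sqrt (mtil_parent T v) * lab T v"
  unfolding mtil_parent_def m_def ..

fun subtree :: "ctree \<Rightarrow> bool list \<Rightarrow> ctree" where
  "subtree T [] = T"
| "subtree (CNode l c d) (b # p) = subtree (if b then d else c) p"
| "subtree (CLeaf l) (b # p) = CLeaf l"

lemma subtree_CLeaf: "subtree (CLeaf l) p = CLeaf l"
  by (cases p) auto

lemma subtree_append: "subtree T (q @ p) = subtree (subtree T q) p"
  by (induction T q rule: subtree.induct) (auto simp: subtree_CLeaf)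

lemma Nil_in_vertices: "[] \<in> vertices T"
  by (cases T) auto

lemma append_in_vertices_iff:
  "q \<in> vertices T \<Longrightarrow> q @ p \<in> vertices T \<longleftrightarrow> p \<in> vertices (subtree T q)"
  by (induction T q rule: subtree.induct) auto

lemma butlast_in_vertices: "v \<in> vertices T \<Longrightarrow> butlast v \<in> vertices T"
proof (induction v arbitrary: T)
  case (Cons b v)
  then show ?case by (cases T) (auto simp: Nil_in_vertices)
qed simp

lemma lab_append: "q \<in> vertices T \<Longrightarrow> lab T (q @ p) = lab (subtree T q) p"
  by (induction T q rule: subtree.induct) auto

lemma lab_in_labels: "v \<in> vertices T \<Longrightarrow> lab T v \<in> labels T"
proof (induction v arbitrary: T)
  case Nil
  then show ?case by (cases T) auto
next
  case (Cons b v)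
  then show ?case by (cases T) auto
qed

lemma mtil_nonneg:
  "\<forall>x \<in> labels T. x \<le> 1 \<Longrightarrow> v \<in> vertices T \<Longrightarrow> 0 \<le> mtil T v"
proof (induction T v rule: mtil.induct)
  case (1 T v)
  have "0 \<le> mtil_parent T v"
    using 1 butlast_in_vertices by (simp add: mtil_parent_def)
  moreover have "lab T v \<le> 1"
    using 1 lab_in_labels by blast
  ultimately show ?case
    by (simp add: mtil_eq)
qed

lemma prod_leaves_m_below:
  assumes labels_le_1: "\<forall>x \<in> labels TC. x \<le> 1"
    and "q \<in> vertices TC" and "internal S (subtree TC q)"
  shows "prod_list (map (\<lambda>p. m TC (q @ p)) (leaves S))
    = sqrt (mtil_parent TC q) * prob S (subtree TC q)"
  using assms(2,3)
proof (induction S arbitrary: q)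
  case ILeaf
  then show ?case
    using lab_append[of q TC "[]"] by (simp add: m_eq)
next
  case (INode a b)
  then obtain l c d where q_node: "subtree TC q = CNode l c d"
    by (cases "subtree TC q") auto
  have children: "q @ [False] \<in> vertices TC" "q @ [True] \<in> vertices TC"
    using append_in_vertices_iff[OF INode.prems(1)] q_node Nil_in_vertices by auto
  have "lab TC q = l"
    using lab_append[of q TC "[]"] INode.prems(1) q_node by simp
  then have mtil_q: "mtil TC q = sqrt (mtil_parent TC q) * (1 - l)"
    by (simp add: mtil_eq)
  have "prod_list (map (\<lambda>p. m TC (q @ p)) (leaves (INode a b)))
      = prod_list (map (\<lambda>p. m TC ((q @ [False]) @ p)) (leaves a))
      * prod_list (map (\<lambda>p. m TC ((q @ [True]) @ p)) (leaves b))"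
    by (simp add: comp_def)
  also have "\<dots> = (sqrt (mtil TC q) * prob a c) * (sqrt (mtil TC q) * prob b d)"
    using INode.IH[OF children(1)] INode.IH[OF children(2)] INode.prems(2) q_node
    by (simp add: subtree_append mtil_parent_def)
  also have "\<dots> = mtil TC q * prob a c * prob b d"
    using mtil_nonneg[OF labels_le_1 INode.prems(1)] by (simp add: algebra_simps)
  finally show ?case
    using mtil_q q_node by simp
qed

theorem mainTheorem3:
  fixes TC :: ctree and T :: itree
  assumes "\<forall>x \<in> labels TC. 0 \<le> x \<and> x \<le> 1"
    and "internal T TC"
  shows "prob T TC = (\<Prod>n<length (leaves T). m TC (leaves T ! n))"
proof -
  have "prod_list (map (m TC) (leaves T)) = prob T TC"
    using prod_leaves_m_below[of TC "[]" T] assms Nil_in_vertices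
    by (simp add: mtil_parent_def)
  then show ?thesis
    by (simp add: prod.list_conv_set_nth atLeast0LessThan)
qed

end
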